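(* There is an absolute constant $C>0$ such that the following holds. Let $k\ge1$, $\mathcal{R}>0$, and let $(\lambda_i,u_i),(\lambda_i',u_i')\in\mathbb{R}\times\mathbb{S}^{d-1}$ for $i\in[k]$ with $\sum_i|\lambda_i|\le\mathcal{R}$ and $\sum_i|\lambda_i'|\le\mathcal{R}$. Let $f_{\vec\lambda,\vec u}(x)=\sum_{i=1}^k\lambda_i\mathrm{ReLU}(\langle u_i,x\rangle)$ and similarly $f_{\vec\lambda',\vec u'}$. Then $$\|f_{\vec\lambda,\vec u}-f_{\vec\lambda',\vec u'}\|_2\le C\,k\max(1,\mathcal{R})\cdot d_{\mathsf{param}}\big((\vec\lambda,\vec u),(\vec\lambda',\vec u')\big).$$
   Context: $\mathrm{ReLU}(a)=\max(0,a)$. For $f:\mathbb{R}^d\to\mathbb{R}$, $\|f\|_2^2=\mathbb{E}_{x\sim\mathcal{N}(0,I_d)}[f(x)^2]$. The parameter distance is $d_{\mathsf{param}}((\vec\lambda,\vec u),(\vec\lambda',\vec u'))=\min_\pi\max_{i\in[k]}\{|\lambda_i-\lambda'_{\pi(i)}|+\|u_i-u'_{\pi(i)}\|\}$, the minimum over permutations $\pi$ of $[k]$, with $\|\cdot\|$ the Euclidean norm. *)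

theory Defs
  imports "HOL-Probability.Probability"
begin

text \<open>Vectors in R^d are represented as functions nat => real; only coordinates j < d matter.
  The dimension d is a variable inside the formula so that the constant C is independent of d.\<close>

definition relu :: "real \<Rightarrow> real" where
  "relu a = max 0 a"

definition inner_d :: "nat \<Rightarrow> (nat \<Rightarrow> real) \<Rightarrow> (nat \<Rightarrow> real) \<Rightarrow> real" where
  "inner_d d u x = (\<Sum>j<d. u j * x j)"

definition norm_d :: "nat \<Rightarrow> (nat \<Rightarrow> real) \<Rightarrow> real" where
  "norm_d d u = sqrt (\<Sum>j<d. (u j)\<^sup>2)"

definition gauss :: "nat \<Rightarrow> (nat \<Rightarrow> real) measure" where
  "gauss d = PiM {..<d} (\<lambda>_. density lborel std_normal_density)"

definition L2norm :: "nat \<Rightarrow> ((nat \<Rightarrow> real) \<Rightarrow> real) \<Rightarrow> real" where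
  "L2norm d f = sqrt (\<integral>x. (f x)\<^sup>2 \<partial>gauss d)"

definition relu_net ::
  "nat \<Rightarrow> nat \<Rightarrow> (nat \<Rightarrow> real) \<Rightarrow> (nat \<Rightarrow> nat \<Rightarrow> real) \<Rightarrow> (nat \<Rightarrow> real) \<Rightarrow> real" where
  "relu_net d k lam u x = (\<Sum>i<k. lam i * relu (inner_d d (u i) x))"

definition d_param ::
  "nat \<Rightarrow> nat \<Rightarrow> (nat \<Rightarrow> real) \<Rightarrow> (nat \<Rightarrow> nat \<Rightarrow> real)
     \<Rightarrow> (nat \<Rightarrow> real) \<Rightarrow> (nat \<Rightarrow> nat \<Rightarrow> real) \<Rightarrow> real" where
  "d_param d k lam u lam' u' =
     Min {Max ((\<lambda>i. \<bar>lam i - lam' (\<pi> i)\<bar> + norm_d d (\<lambda>j. u i j - u' (\<pi> i) j)) ` {..<k})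
          | \<pi>. \<pi> permutes {..<k}}"

end

theory Submission
  imports Defs
begin

text \<open>Choose a permutation \<pi> attaining the parameter distance D. Matching neuron i of the
  first network with neuron \<pi> i of the second, the difference of the networks is
  \<Sum>i. \<lambda> i (ReLU(u i \<bullet> x) - ReLU(u' (\<pi> i) \<bullet> x)) + (\<lambda> i - \<lambda>' (\<pi> i)) ReLU(u' (\<pi> i) \<bullet> x).
  Since ReLU is 1-Lipschitz with ReLU 0 = 0, Cauchy-Schwarz over the k summands and the
  identity E (v \<bullet> x)^2 = |v|^2 for a standard Gaussian x bound the squared L2 distance by
  2k \<Sum>i. (\<lambda> i^2 D^2 + D^2) \<le> 2k (R^2 + k) D^2 \<le> (2 k max 1 R D)^2, so C = 2 works.\<close>

abbreviation std_normal :: "real measure" where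
  "std_normal \<equiv> density lborel std_normal_density"

lemma integrable_std_normal_power: "integrable std_normal (\<lambda>t. t ^ m)"
  by (subst integrable_density) (auto simp: normal_density_nonneg integrable_std_normal_moment)

lemma integral_std_normal_power:
  assumes "m \<le> 2"
  shows "(\<integral>t. t ^ m \<partial>std_normal) = (if m = 1 then 0 else 1)"
proof -
  have "m = 2 * 0 \<or> m = 2 * 0 + 1 \<or> m = 2 * 1" using assms by auto
  then show ?thesis
    using integral_std_normal_moment_even[of 0] integral_std_normal_moment_odd[of 0]
      integral_std_normal_moment_even[of 1]
    by (subst integral_density) (auto simp: normal_density_nonneg)
qed

interpretation std_normal_product: product_sigma_finite "\<lambda>_::nat. std_normal"
  unfolding product_sigma_finite_def
  using prob_space_normal_density[of 1 0] prob_space_imp_sigma_finite by simp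

lemma has_bochner_integral_gauss_coord_mult:
  assumes "j < d" "l < d"
  shows "has_bochner_integral (gauss d) (\<lambda>x. x j * x l) (if j = l then 1 else 0)"
proof -
  \<comment> \<open>x j * x l is the product of the coordinate powers x i ^ m i, so the integral over
    the product measure factorises into standard normal moments of order at most 2.\<close>
  define m :: "nat \<Rightarrow> nat" where "m i = of_bool (i = j) + of_bool (i = l)" for i
  have prod_eq: "(\<Prod>i<d. x i ^ m i) = x j * x l" for x :: "nat \<Rightarrow> real"
  proof -
    have "y ^ of_bool b = (if b then y else 1)" for y :: real and b
      by simp
    then show ?thesis
      using assms by (simp add: m_def power_add prod.distrib)
  qed
  have integrable: "integrable (gauss d) (\<lambda>x. \<Prod>i<d. x i ^ m i)"
    unfolding gauss_def
    by (intro std_normal_product.product_integrable_prod integrable_std_normal_power) simp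
  have "(\<integral>x. (\<Prod>i<d. x i ^ m i) \<partial>gauss d) = (\<Prod>i<d. \<integral>t. t ^ m i \<partial>std_normal)"
    unfolding gauss_def
    by (intro std_normal_product.product_integral_prod integrable_std_normal_power) simp
  also have "\<dots> = (\<Prod>i<d. if m i = 1 then 0 else 1)"
    by (intro prod.cong refl integral_std_normal_power) (simp add: m_def)
  also have "\<dots> = (if j = l then 1 else 0)"
    using assms by (auto simp: m_def of_bool_def intro!: prod.neutral)
  finally show ?thesis
    using integrable by (simp add: has_bochner_integral_iff prod_eq)
qed

lemma has_bochner_integral_gauss_inner_d_square:
  "has_bochner_integral (gauss d) (\<lambda>x. (inner_d d v x)\<^sup>2) ((norm_d d v)\<^sup>2)"
proof -
  have expand: "(inner_d d v x)\<^sup>2 = (\<Sum>j<d. \<Sum>l<d. v j * v l * (x j * x l))" for x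
    unfolding inner_d_def power2_eq_square sum_product by (simp add: algebra_simps)
  have "(norm_d d v)\<^sup>2 = (\<Sum>j<d. \<Sum>l<d. v j * v l * (if j = l then 1 else 0))"
    by (simp add: norm_d_def power2_eq_square sum_nonneg if_distrib cong: if_cong)
  moreover have "has_bochner_integral (gauss d) (\<lambda>x. \<Sum>j<d. \<Sum>l<d. v j * v l * (x j * x l))
      (\<Sum>j<d. \<Sum>l<d. v j * v l * (if j = l then 1 else 0))"
    by (intro has_bochner_integral_sum has_bochner_integral_mult_right
        has_bochner_integral_gauss_coord_mult) auto
  ultimately show ?thesis
    by (simp only: expand)
qed

lemma relu_diff_square_le: "(relu a - relu b)\<^sup>2 \<le> (a - b)\<^sup>2"
proof -
  have "\<bar>relu a - relu b\<bar> \<le> \<bar>a - b\<bar>"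
    unfolding relu_def by (simp add: max_def abs_if)
  then show ?thesis
    by (simp add: abs_le_square_iff)
qed

lemma relu_square_le: "(relu a)\<^sup>2 \<le> a\<^sup>2"
  unfolding relu_def by (auto simp: max_def)

lemma inner_d_diff: "inner_d d v x - inner_d d w x = inner_d d (\<lambda>j. v j - w j) x"
  unfolding inner_d_def by (simp add: sum_subtractf[symmetric] algebra_simps)

lemma relu_net_diff_permute:
  assumes "\<pi> permutes {..<k}"
  shows "relu_net d k lam u x - relu_net d k lam' u' x =
    (\<Sum>i<k. lam i * (relu (inner_d d (u i) x) - relu (inner_d d (u' (\<pi> i)) x))
           + (lam i - lam' (\<pi> i)) * relu (inner_d d (u' (\<pi> i)) x))"
proof -
  have "relu_net d k lam' u' x = (\<Sum>i<k. lam' (\<pi> i) * relu (inner_d d (u' (\<pi> i)) x))"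
    unfolding relu_net_def
    using sum.permute[OF assms, of "\<lambda>i. lam' i * relu (inner_d d (u' i) x)"] by simp
  then show ?thesis
    unfolding relu_net_def by (simp add: sum_subtractf[symmetric] algebra_simps)
qed

lemma relu_net_diff_square_le:
  assumes "\<pi> permutes {..<k}"
  shows "(relu_net d k lam u x - relu_net d k lam' u' x)\<^sup>2 \<le>
    2 * real k * (\<Sum>i<k. (lam i)\<^sup>2 * (inner_d d (\<lambda>j. u i j - u' (\<pi> i) j) x)\<^sup>2
                         + (lam i - lam' (\<pi> i))\<^sup>2 * (inner_d d (u' (\<pi> i)) x)\<^sup>2)"
proof -
  define a where "a i = lam i * (relu (inner_d d (u i) x) - relu (inner_d d (u' (\<pi> i)) x))" for i
  define b where "b i = (lam i - lam' (\<pi> i)) * relu (inner_d d (u' (\<pi> i)) x)" for i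
  have "(relu_net d k lam u x - relu_net d k lam' u' x)\<^sup>2 = (\<Sum>i<k. a i + b i)\<^sup>2"
    unfolding relu_net_diff_permute[OF assms] a_def b_def ..
  also have "\<dots> \<le> real k * (\<Sum>i<k. (a i + b i)\<^sup>2)"
    using sum_squared_le_sum_of_squares[of "\<lambda>i. a i + b i" "{..<k}"] by (simp add: mult.commute)
  also have "\<dots> \<le> real k * (\<Sum>i<k. 2 * ((a i)\<^sup>2 + (b i)\<^sup>2))"
  proof (intro mult_left_mono sum_mono)
    fix i
    show "(a i + b i)\<^sup>2 \<le> 2 * ((a i)\<^sup>2 + (b i)\<^sup>2)"
      using zero_le_power2[of "a i - b i"] by (simp add: power2_eq_square algebra_simps)
  qed simp
  also have "\<dots> = 2 * real k * (\<Sum>i<k. (a i)\<^sup>2 + (b i)\<^sup>2)"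
    by (simp add: sum_distrib_left algebra_simps)
  also have "\<dots> \<le> 2 * real k * (\<Sum>i<k. (lam i)\<^sup>2 * (inner_d d (\<lambda>j. u i j - u' (\<pi> i) j) x)\<^sup>2
                         + (lam i - lam' (\<pi> i))\<^sup>2 * (inner_d d (u' (\<pi> i)) x)\<^sup>2)"
    unfolding a_def b_def power_mult_distrib inner_d_diff[symmetric]
    by (intro mult_left_mono sum_mono add_mono relu_diff_square_le relu_square_le) auto
  finally show ?thesis .
qed

lemma integral_relu_net_diff_square_le:
  assumes "\<pi> permutes {..<k}"
  shows "(\<integral>x. (relu_net d k lam u x - relu_net d k lam' u' x)\<^sup>2 \<partial>gauss d) \<le>
    2 * real k * (\<Sum>i<k. (lam i)\<^sup>2 * (norm_d d (\<lambda>j. u i j - u' (\<pi> i) j))\<^sup>2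
                         + (lam i - lam' (\<pi> i))\<^sup>2 * (norm_d d (u' (\<pi> i)))\<^sup>2)"
    (is "?L \<le> ?R")
proof -
  have "has_bochner_integral (gauss d)
      (\<lambda>x. 2 * real k * (\<Sum>i<k. (lam i)\<^sup>2 * (inner_d d (\<lambda>j. u i j - u' (\<pi> i) j) x)\<^sup>2
                         + (lam i - lam' (\<pi> i))\<^sup>2 * (inner_d d (u' (\<pi> i)) x)\<^sup>2))
      (2 * real k * (\<Sum>i<k. (lam i)\<^sup>2 * (norm_d d (\<lambda>j. u i j - u' (\<pi> i) j))\<^sup>2
                         + (lam i - lam' (\<pi> i))\<^sup>2 * (norm_d d (u' (\<pi> i)))\<^sup>2))"
    (is "has_bochner_integral _ ?G _")
    by (intro has_bochner_integral_mult_right has_bochner_integral_sum has_bochner_integral_add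
        has_bochner_integral_gauss_inner_d_square)
  then have "integrable (gauss d) ?G" and "integral\<^sup>L (gauss d) ?G = ?R"
    by (simp_all only: has_bochner_integral_iff)
  moreover have "?L \<le> integral\<^sup>L (gauss d) ?G"
    using \<open>integrable (gauss d) ?G\<close> relu_net_diff_square_le[OF assms]
      order_trans[OF zero_le_power2 relu_net_diff_square_le[OF assms]]
    by (rule integral_mono')
  ultimately show ?thesis
    by linarith
qed

lemma norm_d_nonneg: "0 \<le> norm_d d v"
  unfolding norm_d_def by (simp add: sum_nonneg)

lemma sum_weighted_squares_le:
  fixes lam \<delta> a :: "nat \<Rightarrow> real"
  assumes lam: "(\<Sum>i<k. \<bar>lam i\<bar>) \<le> R"
    and D: "\<And>i. i < k \<Longrightarrow> \<bar>\<delta> i\<bar> + \<bar>a i\<bar> \<le> D"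
  shows "(\<Sum>i<k. (lam i)\<^sup>2 * (a i)\<^sup>2 + (\<delta> i)\<^sup>2) \<le> (R\<^sup>2 + real k) * D\<^sup>2"
proof -
  have R: "0 \<le> R"
    by (rule order_trans[OF sum_abs_ge_zero lam])
  have "(\<Sum>i<k. (lam i)\<^sup>2 * (a i)\<^sup>2 + (\<delta> i)\<^sup>2) \<le> (\<Sum>i<k. \<bar>lam i\<bar> * R * D\<^sup>2 + D\<^sup>2)"
  proof (rule sum_mono)
    fix i assume "i \<in> {..<k}"
    then have "\<bar>lam i\<bar> \<le> R"
      using member_le_sum[of i "{..<k}" "\<lambda>i. \<bar>lam i\<bar>"] lam by simp
    then have "\<bar>lam i\<bar> * \<bar>lam i\<bar> \<le> \<bar>lam i\<bar> * R"
      by (rule mult_left_mono) simp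
    then have lam_i: "(lam i)\<^sup>2 \<le> \<bar>lam i\<bar> * R"
      by (simp add: power2_eq_square)
    have "\<bar>\<delta> i\<bar> + \<bar>a i\<bar> \<le> D"
      using D \<open>i \<in> {..<k}\<close> by simp
    then have "\<bar>a i\<bar> \<le> \<bar>D\<bar>" and "\<bar>\<delta> i\<bar> \<le> \<bar>D\<bar>"
      by linarith+
    then have "(a i)\<^sup>2 \<le> D\<^sup>2" and "(\<delta> i)\<^sup>2 \<le> D\<^sup>2"
      by (simp_all only: abs_le_square_iff)
    with lam_i R show "(lam i)\<^sup>2 * (a i)\<^sup>2 + (\<delta> i)\<^sup>2 \<le> \<bar>lam i\<bar> * R * D\<^sup>2 + D\<^sup>2"
      by (intro add_mono mult_mono) simp_all
  qed
  also have "\<dots> = (\<Sum>i<k. \<bar>lam i\<bar>) * R * D\<^sup>2 + real k * D\<^sup>2"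
    by (simp add: sum.distrib sum_distrib_right)
  also have "\<dots> \<le> R * R * D\<^sup>2 + real k * D\<^sup>2"
    using lam R by (simp add: mult_right_mono)
  finally show ?thesis
    by (simp add: power2_eq_square distrib_right)
qed

lemma L2norm_relu_net_diff_le:
  assumes \<pi>: "\<pi> permutes {..<k}" and k: "1 \<le> k"
    and unit: "\<forall>i<k. norm_d d (u' i) = 1" and lam: "(\<Sum>i<k. \<bar>lam i\<bar>) \<le> R"
    and D: "\<And>i. i < k \<Longrightarrow> \<bar>lam i - lam' (\<pi> i)\<bar> + norm_d d (\<lambda>j. u i j - u' (\<pi> i) j) \<le> D"
  shows "L2norm d (\<lambda>x. relu_net d k lam u x - relu_net d k lam' u' x) \<le> 2 * real k * max 1 R * D"
proof -
  define w where "w i = norm_d d (\<lambda>j. u i j - u' (\<pi> i) j)" for i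
  have D0: "0 \<le> D"
    using D[of 0] k norm_d_nonneg[of d "\<lambda>j. u 0 j - u' (\<pi> 0) j"] by linarith
  have R0: "0 \<le> R"
    by (rule order_trans[OF sum_abs_ge_zero lam])
  have unit_\<pi>: "norm_d d (u' (\<pi> i)) = 1" if "i < k" for i
    using unit permutes_in_image[OF \<pi>] that by auto
  have "(\<integral>x. (relu_net d k lam u x - relu_net d k lam' u' x)\<^sup>2 \<partial>gauss d)
      \<le> 2 * real k * (\<Sum>i<k. (lam i)\<^sup>2 * (w i)\<^sup>2 + (lam i - lam' (\<pi> i))\<^sup>2)"
    using integral_relu_net_diff_square_le[OF \<pi>, of d lam u lam' u'] unit_\<pi>
    by (simp add: w_def)
  also have "\<dots> \<le> 2 * real k * ((R\<^sup>2 + real k) * D\<^sup>2)"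
    using D norm_d_nonneg
    by (intro mult_left_mono sum_weighted_squares_le[OF lam]) (simp_all add: w_def)
  also have "\<dots> \<le> (2 * real k * max 1 R * D)\<^sup>2"
  proof -
    have "R\<^sup>2 \<le> (max 1 R)\<^sup>2" and M: "1 \<le> (max 1 R)\<^sup>2"
      using R0 by (simp_all add: power_mono one_le_power)
    moreover have "(max 1 R)\<^sup>2 \<le> real k * (max 1 R)\<^sup>2" and "real k \<le> real k * (max 1 R)\<^sup>2"
      using k M by (simp_all add: mult_le_cancel_right1 mult_le_cancel_left1)
    ultimately have "R\<^sup>2 + real k \<le> 2 * real k * (max 1 R)\<^sup>2"
      by linarith
    then have "2 * real k * ((R\<^sup>2 + real k) * D\<^sup>2)
        \<le> 2 * real k * ((2 * real k * (max 1 R)\<^sup>2) * D\<^sup>2)"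
      by (intro mult_left_mono mult_right_mono) simp_all
    also have "\<dots> = (2 * real k * max 1 R * D)\<^sup>2"
      by (simp add: power2_eq_square algebra_simps)
    finally show ?thesis .
  qed
  finally show ?thesis
    unfolding L2norm_def using D0 by (simp add: real_sqrt_le_iff real_le_lsqrt)
qed

lemma d_param_obtain_permutation:
  obtains \<pi> where "\<pi> permutes {..<k}"
    and "\<And>i. i < k \<Longrightarrow> \<bar>lam i - lam' (\<pi> i)\<bar> + norm_d d (\<lambda>j. u i j - u' (\<pi> i) j)
                        \<le> d_param d k lam u lam' u'"
proof -
  define F where "F \<pi> = Max ((\<lambda>i. \<bar>lam i - lam' (\<pi> i)\<bar> + norm_d d (\<lambda>j. u i j - u' (\<pi> i) j)) ` {..<k})"
    for \<pi> :: "nat \<Rightarrow> nat"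
  have "d_param d k lam u lam' u' = Min (F ` {\<pi>. \<pi> permutes {..<k}})"
    unfolding d_param_def F_def by (rule arg_cong[where f = Min]) blast
  moreover have "Min (F ` {\<pi>. \<pi> permutes {..<k}}) \<in> F ` {\<pi>. \<pi> permutes {..<k}}"
    by (rule Min_in) (auto intro: finite_permutations permutes_id)
  ultimately obtain \<pi> where "\<pi> permutes {..<k}" and "d_param d k lam u lam' u' = F \<pi>"
    by auto
  then show thesis
    by (intro that) (auto simp: F_def)
qed

theorem lemmaA2:
  shows "\<exists>C>0. \<forall>(d::nat) (k::nat) (R::real) lam u lam' u'.
     k \<ge> 1 \<longrightarrow> R > 0 \<longrightarrow>
     (\<forall>i<k. norm_d d (u i) = 1) \<longrightarrow> (\<forall>i<k. norm_d d (u' i) = 1) \<longrightarrow>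
     (\<Sum>i<k. \<bar>lam i\<bar>) \<le> R \<longrightarrow> (\<Sum>i<k. \<bar>lam' i\<bar>) \<le> R \<longrightarrow>
     L2norm d (\<lambda>x. relu_net d k lam u x - relu_net d k lam' u' x)
       \<le> C * real k * max 1 R * d_param d k lam u lam' u'"
proof (intro exI[of _ 2] conjI allI impI)
  fix d k :: nat and R :: real and lam lam' :: "nat \<Rightarrow> real" and u u' :: "nat \<Rightarrow> nat \<Rightarrow> real"
  \<comment> \<open>Only the unit norms of u' and the mass bound on lam enter.\<close>
  assume "k \<ge> 1" and "R > 0" and "\<forall>i<k. norm_d d (u i) = 1" and "\<forall>i<k. norm_d d (u' i) = 1"
    and "(\<Sum>i<k. \<bar>lam i\<bar>) \<le> R" and "(\<Sum>i<k. \<bar>lam' i\<bar>) \<le> R"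
  obtain \<pi> where "\<pi> permutes {..<k}"
    and "\<And>i. i < k \<Longrightarrow> \<bar>lam i - lam' (\<pi> i)\<bar> + norm_d d (\<lambda>j. u i j - u' (\<pi> i) j)
                        \<le> d_param d k lam u lam' u'"
    using d_param_obtain_permutation[of k lam lam' d u u'] by blast
  then show "L2norm d (\<lambda>x. relu_net d k lam u x - relu_net d k lam' u' x)
      \<le> 2 * real k * max 1 R * d_param d k lam u lam' u'"
    using L2norm_relu_net_diff_le \<open>k \<ge> 1\<close> \<open>\<forall>i<k. norm_d d (u' i) = 1\<close>
      \<open>(\<Sum>i<k. \<bar>lam i\<bar>) \<le> R\<close>
    by blast
qed simp

end
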